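(* Let $m\ge 1$, let $t_1<\cdots<t_m$ be real, and let $\omega_0,\dots,\omega_m$ be real numbers with $\sum_{k=0}^{\ell}\omega_k\ge 0$ for $\ell=0,1,\dots,m$ and such that the weight $$w(x)={\rm e}^{-x^2}\Big(\omega_0+\sum_{k=1}^m\omega_k\,\theta(x-t_k)\Big),\qquad x\in\mathbb{R},$$ is not identically zero. Let $P_n$, $h_n$, $\alpha_n$, $\beta_n$, $R_{n,k}$, $r_{n,k}$ be as in the context. Then for every $n\ge 0$, $$\alpha_n=\frac12\sum_{k=1}^m R_{n,k},\qquad \beta_n=\frac12\Big(\sum_{k=1}^m r_{n,k}+n\Big).$$
   Context: $\theta(y)=1$ for $y>0$ and $\theta(y)=0$ otherwise. $P_n(z)$ ($n\ge0$) denotes the monic polynomial of degree $n$ orthogonal with respect to $w$ on $\mathbb{R}$: $\int_{\mathbb{R}}P_j(x)P_k(x)w(x)\,dx=h_k\delta_{jk}$ with $h_k>0$; $P_{-1}:=0$. They satisfy the three-term recurrence $zP_n(z)=P_{n+1}(z)+\alpha_nP_n(z)+\beta_nP_{n-1}(z)$ for $n\ge0$, with $\beta_0:=0$ and $\beta_n=h_n/h_{n-1}$ for $n\ge1$. For $k=1,\dots,m$: $R_{n,k}:=\omega_k{\rm e}^{-t_k^2}P_n(t_k)^2/h_n$ for $n\ge0$, and $r_{n,k}:=\omega_k{\rm e}^{-t_k^2}P_n(t_k)P_{n-1}(t_k)/h_{n-1}$ for $n\ge1$, with $r_{0,k}:=0$. *)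

theory Defs
  imports "HOL-Analysis.Analysis" "HOL-Computational_Algebra.Polynomial"
begin

definition theta :: "real \<Rightarrow> real" where
  "theta y = (if y > 0 then 1 else 0)"

definition wt :: "nat \<Rightarrow> (nat \<Rightarrow> real) \<Rightarrow> (nat \<Rightarrow> real) \<Rightarrow> real \<Rightarrow> real" where
  "wt m \<omega> t x = exp (-(x^2)) * (\<omega> 0 + (\<Sum>k=1..m. \<omega> k * theta (x - t k)))"

definition OP :: "(real \<Rightarrow> real) \<Rightarrow> nat \<Rightarrow> real poly" where
  "OP w n = (THE p. degree p = n \<and> lead_coeff p = 1 \<and>
      (\<forall>q. degree q < n \<longrightarrow> (LINT x|lborel. poly p x * poly q x * w x) = 0))"

definition OPm1 :: "(real \<Rightarrow> real) \<Rightarrow> nat \<Rightarrow> real poly" where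
  "OPm1 w n = (if n = 0 then 0 else OP w (n - 1))"

definition hn :: "(real \<Rightarrow> real) \<Rightarrow> nat \<Rightarrow> real" where
  "hn w n = (LINT x|lborel. (poly (OP w n) x)^2 * w x)"

definition beta :: "(real \<Rightarrow> real) \<Rightarrow> nat \<Rightarrow> real" where
  "beta w n = (if n = 0 then 0 else hn w n / hn w (n - 1))"

definition alpha :: "(real \<Rightarrow> real) \<Rightarrow> nat \<Rightarrow> real" where
  "alpha w n = (THE a. \<forall>z. z * poly (OP w n) z
      = poly (OP w (Suc n)) z + a * poly (OP w n) z + beta w n * poly (OPm1 w n) z)"

definition Rnk :: "nat \<Rightarrow> (nat \<Rightarrow> real) \<Rightarrow> (nat \<Rightarrow> real) \<Rightarrow> nat \<Rightarrow> nat \<Rightarrow> real" where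
  "Rnk m \<omega> t n k = \<omega> k * exp (-((t k)^2)) * (poly (OP (wt m \<omega> t) n) (t k))^2 / hn (wt m \<omega> t) n"

definition rnk :: "nat \<Rightarrow> (nat \<Rightarrow> real) \<Rightarrow> (nat \<Rightarrow> real) \<Rightarrow> nat \<Rightarrow> nat \<Rightarrow> real" where
  "rnk m \<omega> t n k = (if n = 0 then 0 else
     \<omega> k * exp (-((t k)^2)) * poly (OP (wt m \<omega> t) n) (t k) * poly (OP (wt m \<omega> t) (n - 1)) (t k)
       / hn (wt m \<omega> t) (n - 1))"

end

(*
  Both identities come from a single integration by parts. Since
  (p e^{-x^2})' = (p' - 2 x p) e^{-x^2}, integrating against the step function
  omega_0 + sum_k omega_k theta(x - t_k) gives, for every polynomial p,

    int p' w = 2 int x p w - sum_k omega_k e^{-t_k^2} p(t_k),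

  the boundary terms coming from the jumps at the t_k. For p = P_n^2 the left side
  vanishes by orthogonality while int x P_n^2 w = alpha_n h_n; for p = P_n P_{n-1}
  the left side is n h_{n-1} while int x P_n P_{n-1} w = h_n = beta_n h_{n-1}.
  The sign conditions on the partial sums of omega make w nonnegative and
  positive on an interval, so the weighted inner product is positive definite
  and the P_n exist.
*)

theory Submission
  imports Defs "HOL-Probability.Distributions" "HOL-Real_Asymp.Real_Asymp"
begin

section \<open>Polynomials times the Gaussian\<close>

definition gauss_poly :: "real poly \<Rightarrow> real \<Rightarrow> real" where
  "gauss_poly p x = poly p x * exp (-(x^2))"

lemma gauss_poly_eq_sum: "gauss_poly p x = (\<Sum>i\<le>degree p. coeff p i * (x^i * exp (-(x^2))))"
  by (simp add: gauss_poly_def poly_altdef sum_distrib_right mult.assoc)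

lemma integrable_gauss_poly: "integrable lborel (gauss_poly p)"
proof -
  have "integrable lborel (\<lambda>x::real. x^i * exp (-(x^2)))" for i
  proof -
    have "(\<lambda>x. x^i * exp (-(x^2))) = (\<lambda>x. sqrt pi * (normal_density 0 (sqrt (1/2)) x * (x - 0)^i))"
      by (simp add: normal_density_def fun_eq_iff)
    then show ?thesis
      by (simp only:) (intro integrable_mult_right integrable_normal_moment, simp)
  qed
  then show ?thesis
    unfolding gauss_poly_eq_sum[abs_def] by (auto intro!: integrable_sum integrable_mult_right)
qed

lemma set_integrable_Ioi_gauss_poly: "set_integrable lborel {c<..} (gauss_poly p)"
  unfolding set_integrable_def by (intro integrable_mult_indicator integrable_gauss_poly) simp

lemma isCont_gauss_poly: "isCont (gauss_poly p) x"
  unfolding gauss_poly_def by (intro continuous_intros)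

lemma tendsto_gauss_poly_at_top: "(gauss_poly p \<longlongrightarrow> 0) at_top"
proof -
  have "((\<lambda>x::real. x^i * exp (-(x^2))) \<longlongrightarrow> 0) at_top" for i
    by real_asymp
  then show ?thesis
    unfolding gauss_poly_eq_sum[abs_def] by (auto intro!: tendsto_null_sum tendsto_mult_right_zero)
qed

lemma tendsto_gauss_poly_at_bot: "(gauss_poly p \<longlongrightarrow> 0) at_bot"
proof -
  have "((\<lambda>x::real. x^i * exp (-(x^2))) \<longlongrightarrow> 0) at_bot" for i
    by real_asymp
  then show ?thesis
    unfolding gauss_poly_eq_sum[abs_def] by (auto intro!: tendsto_null_sum tendsto_mult_right_zero)
qed

lemma has_real_derivative_gauss_poly:
  "(gauss_poly p has_real_derivative gauss_poly (pderiv p - smult 2 (pCons 0 p)) x) (at x)"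
  unfolding gauss_poly_def by (auto intro!: derivative_eq_intros simp: algebra_simps poly_pCons)

lemma integral_gauss_poly_deriv:
  "(LINT x|lborel. gauss_poly (pderiv p - smult 2 (pCons 0 p)) x) = 0"
proof -
  have "(LBINT x=-\<infinity>..\<infinity>. gauss_poly (pderiv p - smult 2 (pCons 0 p)) x) = 0 - 0"
    using has_real_derivative_gauss_poly isCont_gauss_poly integrable_gauss_poly
      tendsto_gauss_poly_at_top tendsto_gauss_poly_at_bot
    by (intro interval_integral_FTC_integrable)
      (auto simp: has_real_derivative_iff_has_vector_derivative[symmetric] ereal_tendsto_simps1
        set_integrable_def)
  then show ?thesis
    by (simp add: interval_lebesgue_integral_def set_lebesgue_integral_def)
qed

lemma set_integral_Ioi_gauss_poly_deriv:
  "(LBINT x:{c<..}. gauss_poly (pderiv p - smult 2 (pCons 0 p)) x) = - gauss_poly p c"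
proof -
  have "(LBINT x=ereal c..\<infinity>. gauss_poly (pderiv p - smult 2 (pCons 0 p)) x) = 0 - gauss_poly p c"
    using has_real_derivative_gauss_poly isCont_gauss_poly set_integrable_Ioi_gauss_poly
      tendsto_gauss_poly_at_top isCont_gauss_poly[where p=p and x=c, unfolded isCont_def filterlim_at_split]
    by (intro interval_integral_FTC_integrable)
      (auto simp: has_real_derivative_iff_has_vector_derivative[symmetric] ereal_tendsto_simps1)
  then show ?thesis
    by (simp add: interval_lebesgue_integral_def)
qed

section \<open>Monic orthogonal polynomials of a positive-definite weight\<close>

lemma poly_in_span_of_monic:
  fixes P :: "nat \<Rightarrow> 'a::comm_ring_1 poly"
  assumes "\<And>j. j < n \<Longrightarrow> degree (P j) = j \<and> lead_coeff (P j) = 1"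
    and "\<And>i. n \<le> i \<Longrightarrow> coeff q i = 0"
  shows "\<exists>d. q = (\<Sum>j<n. smult (d j) (P j))"
  using assms
proof (induction n arbitrary: q)
  case 0
  then show ?case by (simp add: poly_eq_iff)
next
  case (Suc n)
  define q' where "q' = q - smult (coeff q n) (P n)"
  have "degree (P n) = n \<and> lead_coeff (P n) = 1"
    using Suc.prems(1)[OF lessI] .
  then have "coeff q' i = 0" if "n \<le> i" for i
    using that Suc.prems(2) by (cases "i = n") (auto simp: q'_def coeff_eq_0)
  then obtain d where "q' = (\<Sum>j<n. smult (d j) (P j))"
    using Suc.IH[of q'] Suc.prems(1) by (meson less_SucI)
  then have "q = (\<Sum>j<Suc n. smult ((d(n := coeff q n)) j) (P j))"
    by (simp add: q'_def diff_eq_eq)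
  then show ?case by blast
qed

definition wint :: "(real \<Rightarrow> real) \<Rightarrow> real poly \<Rightarrow> real" where
  "wint w q = (LINT x|lborel. poly q x * w x)"

lemma wint_0 [simp]: "wint w 0 = 0"
  by (simp add: wint_def)

lemma wint_smult: "wint w (smult c p) = c * wint w p"
  by (simp add: wint_def mult.assoc)

lemma hn_eq_wint: "hn w n = wint w (OP w n * OP w n)"
  by (simp add: hn_def wint_def power2_eq_square)

definition monic_orth :: "(real \<Rightarrow> real) \<Rightarrow> nat \<Rightarrow> real poly \<Rightarrow> bool" where
  "monic_orth w n p \<longleftrightarrow>
     degree p = n \<and> lead_coeff p = 1 \<and> (\<forall>q. degree q < n \<longrightarrow> wint w (p * q) = 0)"

lemma OP_eq_The_monic_orth: "OP w n = (THE p. monic_orth w n p)"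
  by (simp add: OP_def monic_orth_def wint_def mult.assoc)

lemma monic_orth_coeff:
  "monic_orth w n p \<Longrightarrow> n \<le> i \<Longrightarrow> coeff p i = (if i = n then 1 else 0)"
  by (auto simp: monic_orth_def coeff_eq_0)

lemma monic_orth_wint_eq_0:
  assumes "monic_orth w n p" and "\<And>i. n \<le> i \<Longrightarrow> coeff q i = 0"
  shows "wint w (p * q) = 0"
proof (cases "q = 0")
  case False
  then have "degree q < n"
    using assms(2) leading_coeff_neq_0 not_le by blast
  then show ?thesis using assms(1) by (simp add: monic_orth_def)
qed simp

lemma monic_orth_orthogonal:
  assumes "monic_orth w j p" and "monic_orth w k q" and "j \<noteq> k"
  shows "wint w (p * q) = 0"
proof (cases "k < j")
  case True
  then show ?thesis using assms(1,2) by (simp add: monic_orth_def)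
next
  case False
  then have "wint w (q * p) = 0"
    using assms by (simp add: monic_orth_def)
  then show ?thesis by (simp add: mult.commute)
qed

locale moment_weight =
  fixes w :: "real \<Rightarrow> real"
  assumes integrable_poly_mult: "\<And>q. integrable lborel (\<lambda>x. poly q x * w x)"
begin

lemma wint_add: "wint w (p + q) = wint w p + wint w q"
  using integrable_poly_mult[of p] integrable_poly_mult[of q]
  by (simp add: wint_def distrib_right)

lemma wint_diff: "wint w (p - q) = wint w p - wint w q"
  using integrable_poly_mult[of p] integrable_poly_mult[of q]
  by (simp add: wint_def left_diff_distrib)

lemma wint_sum: "wint w (\<Sum>i\<in>A. f i) = (\<Sum>i\<in>A. wint w (f i))"
  by (induction A rule: infinite_finite_induct) (simp_all add: wint_add)

lemma wint_mult_eq_0_if_orth_to_monic: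
  assumes "\<And>j. j < n \<Longrightarrow> degree (P j) = j \<and> lead_coeff (P j) = 1"
    and "\<And>j. j < n \<Longrightarrow> wint w (p * P j) = 0"
    and "\<And>i. n \<le> i \<Longrightarrow> coeff q i = 0"
  shows "wint w (p * q) = 0"
proof -
  obtain d where "q = (\<Sum>j<n. smult (d j) (P j))"
    using poly_in_span_of_monic[of n P q] assms(1,3) by blast
  then show ?thesis
    using assms(2) by (simp add: sum_distrib_left wint_sum wint_smult)
qed

end

locale orth_weight = moment_weight +
  assumes wint_square_pos: "\<And>p. p \<noteq> 0 \<Longrightarrow> wint w (p * p) > 0"
begin

lemma monic_orth_unique:
  assumes "monic_orth w n p" and "monic_orth w n p'"
  shows "p = p'"
proof -
  have "coeff (p - p') i = 0" if "n \<le> i" for i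
    using that monic_orth_coeff[OF assms(1)] monic_orth_coeff[OF assms(2)] by simp
  then have "wint w ((p - p') * (p - p')) = 0"
    using monic_orth_wint_eq_0[OF assms(1)] monic_orth_wint_eq_0[OF assms(2)]
    by (simp add: left_diff_distrib wint_diff)
  then show ?thesis
    using wint_square_pos[of "p - p'"] by auto
qed

lemma OP_eqI: "monic_orth w n p \<Longrightarrow> OP w n = p"
  unfolding OP_eq_The_monic_orth using monic_orth_unique by blast

text \<open>Existence is Gram--Schmidt applied to \<open>x^n\<close> against the \<open>P\<^sub>j\<close>, \<open>j < n\<close>.\<close>

lemma monic_orth_exists: "\<exists>p. monic_orth w n p"
proof (induction n rule: less_induct)
  case (less n)
  have orth: "monic_orth w j (OP w j)" if "j < n" for j
    using less[OF that] OP_eqI by blast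
  have monic: "degree (OP w j) = j \<and> lead_coeff (OP w j) = 1" if "j < n" for j
    using orth[OF that] unfolding monic_orth_def by blast
  define c where "c j = wint w (monom 1 n * OP w j) / wint w (OP w j * OP w j)" for j
  define p where "p = monom 1 n - (\<Sum>j<n. smult (c j) (OP w j))"
  have coeff_p: "coeff p i = (if i = n then 1 else 0)" if "n \<le> i" for i
    using that monic by (simp add: p_def coeff_sum coeff_monom coeff_eq_0)
  then have "degree p = n"
    by (intro antisym degree_le le_degree) auto
  moreover have "wint w (p * q) = 0" if "degree q < n" for q
  proof (rule wint_mult_eq_0_if_orth_to_monic[OF monic])
    fix i assume "i < n"
    have off_diagonal: "wint w (OP w j * OP w i) = 0" if "j < n" "j \<noteq> i" for j
      using monic_orth_orthogonal[OF orth orth] that \<open>i < n\<close> by blast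
    have "(\<Sum>j<n. c j * wint w (OP w j * OP w i))
        = (\<Sum>j<n. if j = i then c i * wint w (OP w i * OP w i) else 0)"
      using off_diagonal by (intro sum.cong) auto
    also have "\<dots> = wint w (monom 1 n * OP w i)"
    proof -
      have "OP w i \<noteq> 0"
        using monic[OF \<open>i < n\<close>] by auto
      then show ?thesis
        using \<open>i < n\<close> wint_square_pos[of "OP w i"] by (simp add: c_def)
    qed
    finally show "wint w (p * OP w i) = 0"
      by (simp add: p_def left_diff_distrib wint_diff sum_distrib_right wint_sum wint_smult)
  qed (use that in \<open>auto intro: coeff_eq_0\<close>)
  ultimately have "monic_orth w n p"
    using coeff_p by (simp add: monic_orth_def)
  then show ?case by blast
qed

lemma OP_monic_orth: "monic_orth w n (OP w n)"
  using monic_orth_exists OP_eqI by blast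

lemma OP_coeff: "n \<le> i \<Longrightarrow> coeff (OP w n) i = (if i = n then 1 else 0)"
  using monic_orth_coeff[OF OP_monic_orth] .

lemma degree_OP: "degree (OP w n) = n"
  using OP_monic_orth by (simp add: monic_orth_def)

lemma OP_nonzero: "OP w n \<noteq> 0"
  using OP_coeff[of n n] by auto

lemma hn_pos: "hn w n > 0"
  unfolding hn_eq_wint using wint_square_pos[OF OP_nonzero] .

lemma wint_OP_mult_eq_0: "(\<And>i. n \<le> i \<Longrightarrow> coeff q i = 0) \<Longrightarrow> wint w (OP w n * q) = 0"
  using monic_orth_wint_eq_0[OF OP_monic_orth] .

lemma wint_OP_mult_OP: "wint w (OP w i * OP w j) = (if i = j then hn w i else 0)"
  using monic_orth_orthogonal[OF OP_monic_orth OP_monic_orth] by (simp add: hn_eq_wint)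

lemma eq_0_if_orth_to_OP:
  assumes "\<And>i. n \<le> i \<Longrightarrow> coeff r i = 0" and "\<And>j. j < n \<Longrightarrow> wint w (r * OP w j) = 0"
  shows "r = 0"
proof -
  have "wint w (r * r) = 0"
  proof (rule wint_mult_eq_0_if_orth_to_monic[of n "OP w"])
    show "degree (OP w j) = j \<and> lead_coeff (OP w j) = 1" for j
      using OP_coeff[of j j] by (simp add: degree_OP)
  qed (use assms in auto)
  then show ?thesis
    using wint_square_pos[of r] by fastforce
qed

lemma wint_x_OP_mult_OP:
  assumes "i < n"
  shows "wint w (pCons 0 (OP w n * OP w i)) = (if Suc i = n then hn w n else 0)"
proof -
  have "wint w (OP w n * pCons 0 (OP w i)) = (if Suc i = n then hn w n else 0)"
  proof (cases "Suc i = n")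
    case True
    have "wint w (OP w n * (pCons 0 (OP w i) - OP w n)) = 0"
      using True by (intro wint_OP_mult_eq_0) (auto simp: coeff_pCons OP_coeff split: nat.split)
    then show ?thesis
      using True by (simp add: hn_eq_wint right_diff_distrib wint_diff)
  next
    case False
    have "wint w (OP w n * pCons 0 (OP w i)) = 0"
      using False assms by (intro wint_OP_mult_eq_0) (auto simp: coeff_pCons OP_coeff split: nat.split)
    then show ?thesis
      using False by simp
  qed
  then show ?thesis by (simp add: mult.commute)
qed

lemma OP_Suc_recurrence:
  "pCons 0 (OP w n) = OP w (Suc n) + smult (wint w (pCons 0 (OP w n * OP w n)) / hn w n) (OP w n)
     + smult (beta w n) (OPm1 w n)"
proof -
  define a where "a = wint w (pCons 0 (OP w n * OP w n)) / hn w n"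
  define r where "r = pCons 0 (OP w n) - OP w (Suc n) - smult a (OP w n) - smult (beta w n) (OPm1 w n)"
  have "r = 0"
  proof (rule eq_0_if_orth_to_OP)
    fix i assume "Suc n \<le> i"
    then show "coeff r i = 0"
      using OP_coeff[of n] OP_coeff[of "Suc n"] OP_coeff[of "n - 1"]
      by (auto simp: r_def OPm1_def coeff_pCons split: nat.split)
  next
    fix j assume "j < Suc n"
    have "wint w (r * OP w j) = wint w (pCons 0 (OP w n * OP w j)) - wint w (OP w (Suc n) * OP w j)
        - a * wint w (OP w n * OP w j) - beta w n * wint w (OPm1 w n * OP w j)"
      by (simp add: r_def left_diff_distrib wint_diff wint_smult)
    also have "\<dots> = 0"
      using \<open>j < Suc n\<close> hn_pos[of n] hn_pos[of j]
      by (cases "j = n")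
        (auto simp: a_def wint_OP_mult_OP wint_x_OP_mult_OP OPm1_def beta_def)
    finally show "wint w (r * OP w j) = 0" .
  qed
  then show ?thesis
    by (simp add: r_def a_def algebra_simps)
qed

lemma alpha_eq: "alpha w n = wint w (pCons 0 (OP w n * OP w n)) / hn w n"
proof -
  define a where "a = wint w (pCons 0 (OP w n * OP w n)) / hn w n"
  have rec: "z * poly (OP w n) z
      = poly (OP w (Suc n)) z + a * poly (OP w n) z + beta w n * poly (OPm1 w n) z" for z
    using arg_cong[OF OP_Suc_recurrence, of "\<lambda>p. poly p z" n] by (simp add: a_def)
  obtain z0 where "poly (OP w n) z0 \<noteq> 0"
    using OP_nonzero poly_all_0_iff_0 by blast
  then have "alpha w n = a"
    unfolding alpha_def using rec by (intro the_equality) (auto dest!: spec[of _ z0])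
  then show ?thesis
    by (simp add: a_def)
qed

lemma hn_Suc_eq: "hn w (Suc n) = wint w (pCons 0 (OP w (Suc n) * OP w n))"
  using wint_x_OP_mult_OP[of n "Suc n"] by simp

lemma wint_pderiv_OP_square: "wint w (pderiv (OP w n * OP w n)) = 0"
proof -
  have "wint w (OP w n * pderiv (OP w n)) = 0"
    by (intro wint_OP_mult_eq_0) (simp add: coeff_pderiv OP_coeff)
  then show ?thesis
    by (simp only: pderiv_mult wint_add)
qed

lemma wint_pderiv_OP_Suc_mult_OP: "wint w (pderiv (OP w (Suc n) * OP w n)) = Suc n * hn w n"
proof -
  have "wint w (OP w (Suc n) * pderiv (OP w n)) = 0"
    by (intro wint_OP_mult_eq_0) (simp add: coeff_pderiv OP_coeff)
  moreover have "wint w (OP w n * (pderiv (OP w (Suc n)) - smult (Suc n) (OP w n))) = 0"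
    by (intro wint_OP_mult_eq_0) (auto simp: coeff_pderiv OP_coeff)
  ultimately show ?thesis
    by (simp add: pderiv_mult wint_add right_diff_distrib wint_diff wint_smult hn_eq_wint
        mult.commute)
qed

lemma alpha_eq_boundary_sum:
  assumes ibp: "\<And>p. wint w (pderiv p) = 2 * wint w (pCons 0 p) - (\<Sum>k\<in>K. c k * poly p (s k))"
  shows "alpha w n = (\<Sum>k\<in>K. c k * poly (OP w n) (s k) ^ 2) / (2 * hn w n)"
proof -
  have "2 * wint w (pCons 0 (OP w n * OP w n)) = (\<Sum>k\<in>K. c k * poly (OP w n) (s k) ^ 2)"
    using ibp[of "OP w n * OP w n"] by (simp add: wint_pderiv_OP_square power2_eq_square)
  then show ?thesis
    using hn_pos[of n] by (simp add: alpha_eq field_simps)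
qed

lemma beta_Suc_eq_boundary_sum:
  assumes ibp: "\<And>p. wint w (pderiv p) = 2 * wint w (pCons 0 p) - (\<Sum>k\<in>K. c k * poly p (s k))"
  shows "beta w (Suc n)
    = ((\<Sum>k\<in>K. c k * poly (OP w (Suc n)) (s k) * poly (OP w n) (s k)) / hn w n + Suc n) / 2"
proof -
  have "2 * hn w (Suc n)
      = Suc n * hn w n + (\<Sum>k\<in>K. c k * poly (OP w (Suc n)) (s k) * poly (OP w n) (s k))"
    using ibp[of "OP w (Suc n) * OP w n", unfolded wint_pderiv_OP_Suc_mult_OP, folded hn_Suc_eq]
    by (simp add: mult.assoc)
  then show ?thesis
    using hn_pos[of n] by (simp add: beta_def field_simps)
qed

end

section \<open>The Gaussian weight with jumps\<close>

definition wt_step :: "nat \<Rightarrow> (nat \<Rightarrow> real) \<Rightarrow> (nat \<Rightarrow> real) \<Rightarrow> real \<Rightarrow> real" where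
  "wt_step m \<omega> t x = \<omega> 0 + (\<Sum>k=1..m. \<omega> k * theta (x - t k))"

lemma wt_eq_exp_mult_step: "wt m \<omega> t x = exp (-(x^2)) * wt_step m \<omega> t x"
  by (simp add: wt_def wt_step_def)

lemma poly_mult_wt_eq:
  "poly q x * wt m \<omega> t x
     = \<omega> 0 * gauss_poly q x + (\<Sum>k=1..m. \<omega> k * (indicator {t k<..} x *\<^sub>R gauss_poly q x))"
proof -
  have "poly q x * wt m \<omega> t x
      = \<omega> 0 * gauss_poly q x + (\<Sum>k=1..m. \<omega> k * (theta (x - t k) * gauss_poly q x))"
    by (simp add: wt_def gauss_poly_def sum_distrib_left sum_distrib_right algebra_simps)
  also have "\<dots> = \<omega> 0 * gauss_poly q x + (\<Sum>k=1..m. \<omega> k * (indicator {t k<..} x *\<^sub>R gauss_poly q x))"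
    by (intro arg_cong2[where f="(+)"] refl sum.cong) (simp_all add: theta_def)
  finally show ?thesis .
qed

lemma moment_weight_wt: "moment_weight (wt m \<omega> t)"
proof
  fix q
  show "integrable lborel (\<lambda>x. poly q x * wt m \<omega> t x)"
    unfolding poly_mult_wt_eq using integrable_gauss_poly set_integrable_Ioi_gauss_poly
    by (auto simp: set_integrable_def intro!: integrable_add integrable_mult_right integrable_sum)
qed

lemma wint_wt:
  "wint (wt m \<omega> t) q
     = \<omega> 0 * (LINT x|lborel. gauss_poly q x) + (\<Sum>k=1..m. \<omega> k * (LBINT x:{t k<..}. gauss_poly q x))"
proof -
  have integrable_Ioi: "integrable lborel (\<lambda>x. \<omega> k * (indicator {t k<..} x *\<^sub>R gauss_poly q x))" for k
    using set_integrable_Ioi_gauss_poly[of "t k" q] by (simp add: set_integrable_def)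
  have "wint (wt m \<omega> t) q = (LINT x|lborel. \<omega> 0 * gauss_poly q x)
      + (LINT x|lborel. (\<Sum>k=1..m. \<omega> k * (indicator {t k<..} x *\<^sub>R gauss_poly q x)))"
    unfolding wint_def poly_mult_wt_eq using integrable_gauss_poly integrable_Ioi
    by (intro Bochner_Integration.integral_add) auto
  then show ?thesis
    using integrable_Ioi by (simp add: integral_sum set_lebesgue_integral_def)
qed

lemma wint_wt_pderiv:
  "wint (wt m \<omega> t) (pderiv p)
     = 2 * wint (wt m \<omega> t) (pCons 0 p) - (\<Sum>k=1..m. \<omega> k * exp (-((t k)^2)) * poly p (t k))"
proof -
  interpret moment_weight "wt m \<omega> t" by (rule moment_weight_wt)
  have "wint (wt m \<omega> t) (pderiv p - smult 2 (pCons 0 p))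
      = - (\<Sum>k=1..m. \<omega> k * exp (-((t k)^2)) * poly p (t k))"
    unfolding wint_wt integral_gauss_poly_deriv set_integral_Ioi_gauss_poly_deriv
    by (simp add: gauss_poly_def sum_negf mult_ac)
  then show ?thesis
    unfolding wint_diff wint_smult by linarith
qed

lemma mono_on_less_eq_initial_segment:
  fixes t :: "nat \<Rightarrow> 'a::linorder"
  assumes "mono_on {1..m} t"
  obtains l where "l \<le> m" and "{k\<in>{1..m}. t k < x} = {1..l}"
proof -
  define S where "S = {k\<in>{1..m}. t k < x}"
  define l where "l = Max (insert 0 S)"
  have "l \<le> m"
    by (auto simp: l_def S_def)
  moreover have "S = {1..l}"
  proof
    show "S \<subseteq> {1..l}"
      by (auto simp: l_def S_def)
  next
    show "{1..l} \<subseteq> S"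
    proof
      fix j assume j: "j \<in> {1..l}"
      then have "l \<in> S"
        using Max_in[of "insert 0 S"] by (auto simp: l_def S_def)
      then have "t j \<le> t l" "t l < x" "l \<le> m"
        using j mono_onD[OF assms, of j l] by (auto simp: S_def)
      then show "j \<in> S"
        using j by (auto simp: S_def)
    qed
  qed
  ultimately show ?thesis
    using that by (simp add: S_def)
qed

lemma wt_step_nonneg:
  assumes "mono_on {1..m} t" and "\<forall>l\<le>m. (\<Sum>k=0..l. \<omega> k) \<ge> 0"
  shows "wt_step m \<omega> t x \<ge> 0"
proof -
  obtain l where "l \<le> m" and S: "{k\<in>{1..m}. t k < x} = {1..l}"
    using mono_on_less_eq_initial_segment[OF assms(1)] .
  have "(\<Sum>k=1..m. \<omega> k * theta (x - t k)) = (\<Sum>k=1..l. \<omega> k)"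
    unfolding S[symmetric] sum.inter_filter[OF finite_atLeastAtMost]
    by (intro sum.cong) (auto simp: theta_def)
  then have "wt_step m \<omega> t x = (\<Sum>k=0..l. \<omega> k)"
    by (simp add: wt_step_def sum.atLeast_Suc_atMost)
  then show ?thesis
    using assms(2) \<open>l \<le> m\<close> by simp
qed

lemma eventually_wt_step_eq_at_left: "\<forall>\<^sub>F y in at_left x. wt_step m \<omega> t y = wt_step m \<omega> t x"
proof -
  have "\<forall>\<^sub>F y in at_left x. theta (y - t k) = theta (x - t k)" for k
  proof (cases "t k < x")
    case True
    show ?thesis
      using eventually_at_left_real[OF True] by eventually_elim (auto simp: theta_def)
  next
    case False
    have "x - 1 < x" by simp
    from eventually_at_left_real[OF this] show ?thesis
      by eventually_elim (use False in \<open>auto simp: theta_def\<close>)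
  qed
  then have "\<forall>\<^sub>F y in at_left x. \<forall>k\<in>{1..m}. theta (y - t k) = theta (x - t k)"
    by (intro eventually_ball_finite) auto
  then show ?thesis
    by eventually_elim (simp add: wt_step_def)
qed

lemma integral_pos_if_pos_on_interval:
  fixes f :: "real \<Rightarrow> real"
  assumes "integrable lborel f" and "\<And>x. 0 \<le> f x" and "a < b" and "finite Z"
    and "\<And>x. x \<in> {a<..<b} \<Longrightarrow> x \<notin> Z \<Longrightarrow> 0 < f x"
  shows "0 < integral\<^sup>L lborel f"
proof (rule ccontr)
  assume "\<not> 0 < integral\<^sup>L lborel f"
  moreover have "0 \<le> integral\<^sup>L lborel f"
    using assms(2) by (intro integral_nonneg_AE) simp
  ultimately have "integral\<^sup>L lborel f = 0"
    by simp
  then have "AE x in lborel. f x = 0"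
    using integral_nonneg_eq_0_iff_AE[OF assms(1)] assms(2) by simp
  moreover have "AE x in lborel. x \<notin> Z"
    by (rule AE_not_in[OF finite_imp_null_set_lborel[OF assms(4)]])
  ultimately have "AE x in lborel. x \<notin> {a<..<b}"
    by eventually_elim (use assms(5) in fastforce)
  then have "emeasure lborel {a<..<b} = 0"
    by (subst (asm) AE_iff_measurable[where N="{a<..<b}"]) auto
  then show False
    using assms(3) by simp
qed

lemma wint_wt_square_pos:
  assumes "mono_on {1..m} t" and "\<forall>l\<le>m. (\<Sum>k=0..l. \<omega> k) \<ge> 0"
    and "\<exists>x. wt m \<omega> t x \<noteq> 0" and "p \<noteq> 0"
  shows "wint (wt m \<omega> t) (p * p) > 0"
proof -
  have step_nonneg: "wt_step m \<omega> t y \<ge> 0" for y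
    using wt_step_nonneg[OF assms(1,2)] .
  obtain x where "wt m \<omega> t x \<noteq> 0"
    using assms(3) by blast
  then have step_x: "wt_step m \<omega> t x > 0"
    using step_nonneg[of x] by (simp add: wt_eq_exp_mult_step order_less_le)
  obtain a where "a < x"
    and step_const: "\<And>y. a < y \<Longrightarrow> y < x \<Longrightarrow> wt_step m \<omega> t y = wt_step m \<omega> t x"
    using eventually_wt_step_eq_at_left[where x=x] unfolding eventually_at_left_field by blast
  have "0 < poly (p * p) y * wt m \<omega> t y" if "a < y" "y < x" "poly p y \<noteq> 0" for y
  proof -
    have "0 < poly p y * poly p y"
      using that(3) not_real_square_gt_zero by blast
    then show ?thesis
      using that step_x step_const by (simp add: wt_eq_exp_mult_step)
  qed
  then show ?thesis
    unfolding wint_def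
    using moment_weight.integrable_poly_mult[OF moment_weight_wt, where q="p * p"] step_nonneg
      poly_roots_finite[OF assms(4)] \<open>a < x\<close>
    by (intro integral_pos_if_pos_on_interval[where Z="{y. poly p y = 0}" and a=a and b=x])
      (auto simp: wt_eq_exp_mult_step)
qed

lemma orth_weight_wt:
  assumes "strict_mono_on {1..m} t" and "\<forall>l\<le>m. (\<Sum>k=0..l. \<omega> k) \<ge> 0"
    and "\<exists>x. wt m \<omega> t x \<noteq> 0"
  shows "orth_weight (wt m \<omega> t)"
  using moment_weight_wt wint_wt_square_pos[OF strict_mono_on_imp_mono_on[OF assms(1)] assms(2,3)]
  by (intro orth_weight.intro orth_weight_axioms.intro)

theorem lemma2p6:
  fixes m :: nat and t \<omega> :: "nat \<Rightarrow> real" and n :: nat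
  assumes "m \<ge> 1"
    and "strict_mono_on {1..m} t"
    and "\<forall>l\<le>m. (\<Sum>k=0..l. \<omega> k) \<ge> 0"
    and "\<exists>x. wt m \<omega> t x \<noteq> 0"
  shows "alpha (wt m \<omega> t) n = (1/2) * (\<Sum>k=1..m. Rnk m \<omega> t n k)
       \<and> beta (wt m \<omega> t) n = (1/2) * ((\<Sum>k=1..m. rnk m \<omega> t n k) + real n)"
proof -
  interpret orth_weight "wt m \<omega> t"
    using orth_weight_wt assms(2-4) .
  note ibp = wint_wt_pderiv[of m \<omega> t]
  have "alpha (wt m \<omega> t) n = (1/2) * (\<Sum>k=1..m. Rnk m \<omega> t n k)"
    unfolding alpha_eq_boundary_sum[OF ibp] Rnk_def by (simp add: sum_divide_distrib mult.commute)
  moreover have "beta (wt m \<omega> t) n = (1/2) * ((\<Sum>k=1..m. rnk m \<omega> t n k) + real n)"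
  proof (cases n)
    case 0
    then show ?thesis by (simp add: beta_def rnk_def)
  next
    case (Suc n')
    show ?thesis
      unfolding Suc beta_Suc_eq_boundary_sum[OF ibp] rnk_def by (simp add: sum_divide_distrib)
  qed
  ultimately show ?thesis ..
qed

end
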